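(* Let $T$ be a tree with diameter $d$, and let $k$ be an integer with $1\le k\le d-1$. Then the $k$th power $T^k$ contains a $(k+1)^+$-branching spanning tree.
   Context: All graphs are finite, simple, undirected. In a tree, vertices of degree $1$ are leaves and all other vertices are internal vertices. For an integer $m$, a tree is $m^+$-branching if every internal vertex has degree at least $m$. For a graph $G=(V,E)$ and $k\in\mathbb{N}$, the $k$th power $G^k$ is the graph on vertex set $V$ in which $u\ne v$ are adjacent iff $d_G(u,v)\le k$ (distance in $G$). The diameter is the maximum distance between two vertices. *)

theory Defs
  imports Main
begin

definition is_graph :: "'a set \<Rightarrow> 'a set set \<Rightarrow> bool" where
  "is_graph V E \<longleftrightarrow> finite V \<and> (\<forall>e\<in>E. \<exists>u v. u \<in> V \<and> v \<in> V \<and> u \<noteq> v \<and> e = {u, v})"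

definition walk :: "'a set \<Rightarrow> 'a set set \<Rightarrow> 'a list \<Rightarrow> bool" where
  "walk V E xs \<longleftrightarrow> xs \<noteq> [] \<and> set xs \<subseteq> V \<and>
     (\<forall>i. Suc i < length xs \<longrightarrow> {xs ! i, xs ! Suc i} \<in> E)"

definition connected_graph :: "'a set \<Rightarrow> 'a set set \<Rightarrow> bool" where
  "connected_graph V E \<longleftrightarrow>
     (\<forall>u\<in>V. \<forall>v\<in>V. \<exists>xs. walk V E xs \<and> hd xs = u \<and> last xs = v)"

definition is_cycle :: "'a set \<Rightarrow> 'a set set \<Rightarrow> 'a list \<Rightarrow> bool" where
  "is_cycle V E xs \<longleftrightarrow> length xs \<ge> 3 \<and> distinct xs \<and> walk V E xs \<and> {last xs, hd xs} \<in> E"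

definition is_tree :: "'a set \<Rightarrow> 'a set set \<Rightarrow> bool" where
  "is_tree V E \<longleftrightarrow> is_graph V E \<and> V \<noteq> {} \<and> connected_graph V E \<and> \<not> (\<exists>xs. is_cycle V E xs)"

text \<open>Distance: number of edges of a shortest walk (meaningful in connected graphs).\<close>
definition gdist :: "'a set \<Rightarrow> 'a set set \<Rightarrow> 'a \<Rightarrow> 'a \<Rightarrow> nat" where
  "gdist V E u v = (LEAST n. \<exists>xs. walk V E xs \<and> hd xs = u \<and> last xs = v \<and> length xs = Suc n)"

definition diameter :: "'a set \<Rightarrow> 'a set set \<Rightarrow> nat" where
  "diameter V E = Max {gdist V E u v | u v. u \<in> V \<and> v \<in> V}"

definition degree :: "'a set \<Rightarrow> 'a set set \<Rightarrow> 'a \<Rightarrow> nat" where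
  "degree V E v = card {u \<in> V. {u, v} \<in> E}"

definition graph_power :: "'a set \<Rightarrow> 'a set set \<Rightarrow> nat \<Rightarrow> 'a set set" where
  "graph_power V E k = {{u, v} | u v. u \<in> V \<and> v \<in> V \<and> u \<noteq> v \<and> gdist V E u v \<le> k}"

definition branching :: "nat \<Rightarrow> 'a set \<Rightarrow> 'a set set \<Rightarrow> bool" where
  "branching m V E \<longleftrightarrow> (\<forall>v\<in>V. degree V E v \<noteq> 1 \<longrightarrow> degree V E v \<ge> m)"

definition spanning_tree :: "'a set \<Rightarrow> 'a set set \<Rightarrow> 'a set set \<Rightarrow> bool" where
  "spanning_tree V E F \<longleftrightarrow> F \<subseteq> E \<and> is_tree V F"

end

theory Submission
  imports Defs
begin

text \<open>
  Only connectivity and the k + 2 vertices guaranteed by the diameter bound matter: the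
  statement holds for every finite connected graph G with at least k + 2 vertices, by
  induction on the number of vertices. If some vertex c is within distance k of all others,
  the star centred at c is the required tree. Otherwise fix a vertex z, let h > k be its
  eccentricity, and let u be the vertex at distance h - k from z on a shortest path to a
  farthest vertex. The set D of vertices reached from z by a shortest path through u contains
  the last k vertices of that path and, by maximality of h, lies within distance k of u.
  Removing D keeps the graph connected (every remaining vertex has a neighbour closer to z
  outside D) and leaves a vertex at distance more than k from u, hence at least k + 2 vertices.
  A tree for the smaller graph, with the vertices of D attached to u as leaves, works for G:
  u gains at least k new neighbours and already had at least one.
\<close>

section \<open>Walks and distances\<close>

lemma walk_single [simp]: "walk V E [x] \<longleftrightarrow> x \<in> V"
  unfolding walk_def by auto

lemma walk_Cons_Cons [simp]:
  "walk V E (x # y # xs) \<longleftrightarrow> x \<in> V \<and> {x, y} \<in> E \<and> walk V E (y # xs)"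
proof -
  have "(\<forall>i. Suc i < length (x # y # xs) \<longrightarrow> {(x # y # xs) ! i, (x # y # xs) ! Suc i} \<in> E)
    \<longleftrightarrow> {x, y} \<in> E \<and> (\<forall>i. Suc i < length (y # xs) \<longrightarrow> {(y # xs) ! i, (y # xs) ! Suc i} \<in> E)"
    (is "?L \<longleftrightarrow> ?R")
  proof
    assume L: ?L
    show ?R
    proof (intro conjI allI impI)
      show "{x, y} \<in> E" using L[rule_format, of 0] by simp
      fix i assume "Suc i < length (y # xs)"
      then show "{(y # xs) ! i, (y # xs) ! Suc i} \<in> E" using L[rule_format, of "Suc i"] by simp
    qed
  next
    assume R: ?R
    show ?L
    proof (intro allI impI)
      fix i assume "Suc i < length (x # y # xs)"
      then show "{(x # y # xs) ! i, (x # y # xs) ! Suc i} \<in> E" using R by (cases i) auto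
    qed
  qed
  then show ?thesis unfolding walk_def by auto
qed

lemma walk_nonempty: "walk V E xs \<Longrightarrow> xs \<noteq> []"
  unfolding walk_def by auto

lemma walk_append:
  assumes "xs \<noteq> []" "ys \<noteq> []"
  shows "walk V E (xs @ ys) \<longleftrightarrow> walk V E xs \<and> walk V E ys \<and> {last xs, hd ys} \<in> E"
  using assms(1)
proof (induction xs rule: list_nonempty_induct)
  case (single x)
  then show ?case using assms(2) by (cases ys) auto
next
  case (cons x xs)
  then show ?case by (cases xs) auto
qed

lemma walk_join:
  assumes "walk V E xs" "walk V E ys" "last xs = hd ys"
  shows "walk V E (xs @ tl ys)" "hd (xs @ tl ys) = hd xs" "last (xs @ tl ys) = last ys"
    "length (xs @ tl ys) = length xs + length ys - 1"
proof -
  obtain y ys' where ys: "ys = y # ys'" using walk_nonempty[OF assms(2)] by (cases ys) auto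
  have "xs \<noteq> []" using walk_nonempty[OF assms(1)] .
  then show "walk V E (xs @ tl ys)" using assms ys
    by (cases ys') (auto simp: walk_append)
  show "hd (xs @ tl ys) = hd xs" "last (xs @ tl ys) = last ys"
    "length (xs @ tl ys) = length xs + length ys - 1"
    using \<open>xs \<noteq> []\<close> assms(3) ys by (auto simp: last_append)
qed

lemma walk_rev [simp]: "walk V E (rev xs) \<longleftrightarrow> walk V E xs"
proof (cases "xs = []")
  case True
  then show ?thesis by (simp add: walk_def)
next
  case False
  then show ?thesis
  proof (induction xs rule: list_nonempty_induct)
    case (single x)
    then show ?case by simp
  next
    case (cons x xs)
    have "walk V E (rev (x # xs)) \<longleftrightarrow> walk V E (rev xs) \<and> x \<in> V \<and> {hd xs, x} \<in> E"
      using cons by (simp add: walk_append last_rev)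
    also have "\<dots> \<longleftrightarrow> walk V E (x # xs)"
      using cons by (cases xs) (auto simp: insert_commute)
    finally show ?case .
  qed
qed

lemma walk_take: "walk V E xs \<Longrightarrow> 0 < n \<Longrightarrow> walk V E (take n xs)"
  unfolding walk_def by (auto dest: in_set_takeD)

lemma walk_drop: "walk V E xs \<Longrightarrow> n < length xs \<Longrightarrow> walk V E (drop n xs)"
  unfolding walk_def by (auto dest: in_set_dropD)

lemma walk_mono: "walk V' E' xs \<Longrightarrow> V' \<subseteq> V \<Longrightarrow> E' \<subseteq> E \<Longrightarrow> walk V E xs"
  unfolding walk_def by auto

lemma connected_graphI_root:
  assumes "c \<in> V" "\<And>y. y \<in> V \<Longrightarrow> \<exists>xs. walk V E xs \<and> hd xs = y \<and> last xs = c"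
  shows "connected_graph V E"
  unfolding connected_graph_def
proof (intro ballI)
  fix u v assume "u \<in> V" "v \<in> V"
  obtain xs where xs: "walk V E xs" "hd xs = u" "last xs = c" using assms(2) \<open>u \<in> V\<close> by blast
  obtain ys where ys: "walk V E ys" "hd ys = v" "last ys = c" using assms(2) \<open>v \<in> V\<close> by blast
  have "ys \<noteq> []" using walk_nonempty[OF ys(1)] .
  then have rev_ys: "walk V E (rev ys)" "hd (rev ys) = c" "last (rev ys) = v"
    using ys by (auto simp: hd_rev last_rev)
  show "\<exists>xs. walk V E xs \<and> hd xs = u \<and> last xs = v"
    using walk_join[OF xs(1) rev_ys(1)] xs rev_ys by metis
qed

lemma gdist_le:
  assumes "walk V E xs" "hd xs = a" "last xs = b" "length xs = Suc n"
  shows "gdist V E a b \<le> n"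
  unfolding gdist_def by (rule Least_le) (use assms in blast)

lemma obtain_shortest_walk:
  assumes "connected_graph V E" "a \<in> V" "b \<in> V"
  obtains xs where "walk V E xs" "hd xs = a" "last xs = b" "length xs = Suc (gdist V E a b)"
proof -
  obtain xs where xs: "walk V E xs" "hd xs = a" "last xs = b"
    using assms unfolding connected_graph_def by blast
  then have "length xs = Suc (length xs - 1)" using walk_nonempty by fastforce
  with xs have "\<exists>n xs. walk V E xs \<and> hd xs = a \<and> last xs = b \<and> length xs = Suc n" by blast
  then have "\<exists>xs. walk V E xs \<and> hd xs = a \<and> last xs = b \<and> length xs = Suc (gdist V E a b)"
    unfolding gdist_def by (rule LeastI_ex)
  then show ?thesis using that by blast
qed

lemma gdist_self [simp]: "a \<in> V \<Longrightarrow> gdist V E a a = 0"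
  using gdist_le[of V E "[a]" a a 0] by simp

lemma gdist_eq_0_iff:
  assumes "connected_graph V E" "a \<in> V" "b \<in> V"
  shows "gdist V E a b = 0 \<longleftrightarrow> a = b"
proof
  assume "gdist V E a b = 0"
  then obtain xs where "walk V E xs" "hd xs = a" "last xs = b" "length xs = 1"
    using obtain_shortest_walk[OF assms] by (metis One_nat_def)
  then show "a = b" by (cases xs) auto
qed (use assms in simp)

lemma gdist_edge: "{a, b} \<in> E \<Longrightarrow> a \<in> V \<Longrightarrow> b \<in> V \<Longrightarrow> gdist V E a b \<le> 1"
  using gdist_le[of V E "[a, b]" a b 1] by simp

lemma gdist_triangle:
  assumes "connected_graph V E" "a \<in> V" "b \<in> V" "c \<in> V"
  shows "gdist V E a c \<le> gdist V E a b + gdist V E b c"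
proof -
  obtain xs where xs: "walk V E xs" "hd xs = a" "last xs = b" "length xs = Suc (gdist V E a b)"
    using obtain_shortest_walk[OF assms(1-3)] .
  obtain ys where ys: "walk V E ys" "hd ys = b" "last ys = c" "length ys = Suc (gdist V E b c)"
    using obtain_shortest_walk[OF assms(1,3,4)] .
  have "last xs = hd ys" using xs ys by simp
  from walk_join[OF xs(1) ys(1) this] show ?thesis
    by (intro gdist_le[of V E "xs @ tl ys"]) (use xs ys in auto)
qed

lemma gdist_mono:
  assumes "connected_graph W H" "a \<in> W" "b \<in> W" "W \<subseteq> V" "H \<subseteq> E"
  shows "gdist V E a b \<le> gdist W H a b"
proof -
  obtain xs where xs: "walk W H xs" "hd xs = a" "last xs = b" "length xs = Suc (gdist W H a b)"
    using obtain_shortest_walk[OF assms(1-3)] .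
  show ?thesis using walk_mono[OF xs(1) assms(4,5)] xs(2-4) by (rule gdist_le)
qed

lemma gdist_nth_le:
  assumes "walk V E ws" "i \<le> j" "j < length ws"
  shows "gdist V E (ws ! i) (ws ! j) \<le> j - i"
proof (rule gdist_le)
  show "walk V E (drop i (take (Suc j) ws))" using assms by (intro walk_drop walk_take) auto
qed (use assms in \<open>auto simp: hd_drop_conv_nth last_conv_nth\<close>)

lemma gdist_shortest_walk_nth:
  assumes "connected_graph V E" "walk V E ws" "hd ws = a" "last ws = b"
    "length ws = Suc (gdist V E a b)" "i < length ws"
  shows "gdist V E a (ws ! i) = i"
proof -
  let ?m = "gdist V E a b"
  have "ws \<noteq> []" using walk_nonempty[OF assms(2)] .
  then have ends: "ws ! 0 = a" "ws ! ?m = b"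
    using assms(3-5) by (auto simp: hd_conv_nth last_conv_nth)
  have inV: "a \<in> V" "b \<in> V" "ws ! i \<in> V"
    using assms(2) \<open>ws \<noteq> []\<close> nth_mem[OF assms(6)] assms(3,4) unfolding walk_def by auto
  have "gdist V E a (ws ! i) \<le> i" using gdist_nth_le[OF assms(2), of 0 i] ends assms(6) by simp
  moreover have "gdist V E (ws ! i) b \<le> ?m - i"
    using gdist_nth_le[OF assms(2), of i ?m] ends assms(5,6) by simp
  moreover have "?m \<le> gdist V E a (ws ! i) + gdist V E (ws ! i) b"
    using gdist_triangle[OF assms(1) inV(1,3,2)] .
  ultimately show ?thesis using assms(5,6) by linarith
qed

lemma shortest_walk_inj_on_nth:
  assumes "connected_graph V E" "walk V E ws" "hd ws = a" "last ws = b"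
    "length ws = Suc (gdist V E a b)"
  shows "inj_on ((!) ws) {..<length ws}"
proof (rule inj_onI)
  fix i j assume "i \<in> {..<length ws}" "j \<in> {..<length ws}" "ws ! i = ws ! j"
  then show "i = j" using gdist_shortest_walk_nth[OF assms] by (metis lessThan_iff)
qed

lemma Suc_gdist_le_card:
  assumes "is_graph V E" "connected_graph V E" "a \<in> V" "b \<in> V"
  shows "Suc (gdist V E a b) \<le> card V"
proof -
  obtain ws where ws: "walk V E ws" "hd ws = a" "last ws = b" "length ws = Suc (gdist V E a b)"
    using obtain_shortest_walk[OF assms(2-4)] .
  have "(!) ws ` {..<length ws} \<subseteq> V" using ws(1) unfolding walk_def by auto
  moreover have "finite V" using assms(1) unfolding is_graph_def by blast
  ultimately have "card ((!) ws ` {..<length ws}) \<le> card V" by (rule card_mono[rotated])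
  then show ?thesis using card_image[OF shortest_walk_inj_on_nth[OF assms(2) ws]] ws(4) by simp
qed

lemma Suc_diameter_le_card:
  assumes "is_graph V E" "connected_graph V E" "V \<noteq> {}"
  shows "Suc (diameter V E) \<le> card V"
proof -
  have "finite V" using assms(1) unfolding is_graph_def by blast
  moreover have "{gdist V E u v | u v. u \<in> V \<and> v \<in> V} = (\<lambda>(u, v). gdist V E u v) ` (V \<times> V)"
    by auto
  ultimately have "finite {gdist V E u v | u v. u \<in> V \<and> v \<in> V}" by simp
  moreover have "{gdist V E u v | u v. u \<in> V \<and> v \<in> V} \<noteq> {}" using assms(3) by blast
  ultimately have "diameter V E \<in> {gdist V E u v | u v. u \<in> V \<and> v \<in> V}"
    unfolding diameter_def by (rule Max_in)
  then show ?thesis using Suc_gdist_le_card[OF assms(1,2)] by auto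
qed

lemma gdist_predecessor:
  assumes "connected_graph V E" "a \<in> V" "b \<in> V" "gdist V E a b = Suc n"
  obtains p where "p \<in> V" "gdist V E a p = n" "{p, b} \<in> E"
proof -
  obtain ws where ws: "walk V E ws" "hd ws = a" "last ws = b" "length ws = Suc (gdist V E a b)"
    using obtain_shortest_walk[OF assms(1-3)] .
  have "ws ! Suc n = b" using ws(3,4) assms(4) walk_nonempty[OF ws(1)] by (simp add: last_conv_nth)
  moreover have "{ws ! n, ws ! Suc n} \<in> E" "ws ! n \<in> V"
    using ws(1,4) assms(4) unfolding walk_def by auto
  moreover have "gdist V E a (ws ! n) = n"
    using gdist_shortest_walk_nth[OF assms(1) ws] ws(4) assms(4) by simp
  ultimately show ?thesis using that[of "ws ! n"] by simp
qed

section \<open>Cycles and trees\<close>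

lemma is_cycle_edge_mod:
  assumes "is_cycle V E xs" "j < length xs"
  shows "{xs ! j, xs ! (Suc j mod length xs)} \<in> E"
proof (cases "Suc j < length xs")
  case True
  then show ?thesis using assms(1) unfolding is_cycle_def walk_def by simp
next
  case False
  then have "j = length xs - 1" using assms(2) by simp
  moreover have "xs \<noteq> []" using assms(2) by auto
  ultimately show ?thesis
    using assms(1) unfolding is_cycle_def by (simp add: hd_conv_nth last_conv_nth)
qed

lemma is_cycle_two_neighbours:
  assumes "is_cycle V E xs" "x \<in> set xs"
  obtains a b where "a \<noteq> b" "{x, a} \<in> E" "{x, b} \<in> E"
proof -
  let ?n = "length xs"
  have n: "3 \<le> ?n" and "distinct xs" using assms(1) unfolding is_cycle_def by auto
  then have nth_neq: "xs ! p \<noteq> xs ! q" if "p < ?n" "q < ?n" "p \<noteq> q" for p q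
    using that by (simp add: nth_eq_iff_index_eq)
  obtain i where i: "i < ?n" "xs ! i = x" using assms(2) by (auto simp: in_set_conv_nth)
  define pred where "pred = (if i = 0 then ?n - 1 else i - 1)"
  have pred: "pred < ?n" "Suc pred mod ?n = i" using i unfolding pred_def by auto
  have "{x, xs ! (Suc i mod ?n)} \<in> E" using is_cycle_edge_mod[OF assms(1) i(1)] i(2) by simp
  moreover have "{x, xs ! pred} \<in> E"
    using is_cycle_edge_mod[OF assms(1) pred(1)] pred(2) i(2) by (simp add: insert_commute)
  moreover have "Suc i mod ?n \<noteq> pred" using i n unfolding pred_def by (auto simp: mod_Suc)
  then have "xs ! (Suc i mod ?n) \<noteq> xs ! pred"
    using pred(1) n by (intro nth_neq) (auto intro: mod_less_divisor)
  ultimately show ?thesis using that by blast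
qed

lemma is_tree_singleton: "is_tree {c} {}"
proof -
  have "\<not> is_cycle {c} {} xs" for xs
    using is_cycle_edge_mod[of "{c}" "{}" xs 0] unfolding is_cycle_def by auto
  moreover have "connected_graph {c} {}"
    by (rule connected_graphI_root[of c]) (auto intro!: exI[of _ "[c]"])
  ultimately show ?thesis unfolding is_tree_def is_graph_def by blast
qed

section \<open>Attaching pendant vertices\<close>

definition add_pendants :: "'a set set \<Rightarrow> 'a \<Rightarrow> 'a set \<Rightarrow> 'a set set" where
  "add_pendants F u D = F \<union> (\<lambda>x. {u, x}) ` D"

lemma is_graph_edge_subset: "is_graph V E \<Longrightarrow> e \<in> E \<Longrightarrow> e \<subseteq> V"
  unfolding is_graph_def by force

context
  fixes W D :: "'a set" and F :: "'a set set" and u :: 'a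
  assumes graph: "is_graph W F" and u: "u \<in> W" and disjoint: "W \<inter> D = {}"
begin

lemma add_pendants_edge_pendant:
  assumes "x \<in> D"
  shows "{a, x} \<in> add_pendants F u D \<longleftrightarrow> a = u"
proof -
  have "x \<notin> W" "x \<noteq> u" using assms disjoint u by auto
  then have "{a, x} \<notin> F" using is_graph_edge_subset[OF graph] by blast
  moreover have "{a, x} = {u, y} \<longleftrightarrow> a = u \<and> x = y" for y
    using \<open>x \<noteq> u\<close> by (auto simp: doubleton_eq_iff)
  then have "{a, x} \<in> (\<lambda>y. {u, y}) ` D \<longleftrightarrow> a = u" using assms by (simp add: image_iff)
  ultimately show ?thesis unfolding add_pendants_def by blast
qed

lemma add_pendants_edge_nonroot:
  assumes "v \<in> W" "v \<noteq> u"
  shows "{a, v} \<in> add_pendants F u D \<longleftrightarrow> {a, v} \<in> F"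
proof -
  have "{a, v} \<notin> (\<lambda>y. {u, y}) ` D"
  proof
    assume "{a, v} \<in> (\<lambda>y. {u, y}) ` D"
    then obtain y where "y \<in> D" "{a, v} = {u, y}" by blast
    then have "v \<in> {u, y}" by blast
    then show False using assms \<open>y \<in> D\<close> disjoint by blast
  qed
  then show ?thesis unfolding add_pendants_def by blast
qed

lemma add_pendants_edge_root: "{a, u} \<in> add_pendants F u D \<longleftrightarrow> {a, u} \<in> F \<or> a \<in> D"
proof -
  have "{a, u} = {u, y} \<longleftrightarrow> a = y" for y by (auto simp: doubleton_eq_iff)
  then have "{a, u} \<in> (\<lambda>y. {u, y}) ` D \<longleftrightarrow> a \<in> D" by (simp add: image_iff)
  then show ?thesis unfolding add_pendants_def by blast
qed

lemma add_pendants_edge_within: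
  assumes "p \<in> W" "q \<in> W"
  shows "{p, q} \<in> add_pendants F u D \<longleftrightarrow> {p, q} \<in> F"
proof (cases "q = u")
  case True
  then show ?thesis using add_pendants_edge_root[of p] assms(1) disjoint by blast
qed (use add_pendants_edge_nonroot[OF assms(2)] in blast)

lemma degree_add_pendants:
  assumes "finite D"
  shows "x \<in> D \<Longrightarrow> degree (W \<union> D) (add_pendants F u D) x = 1"
    and "v \<in> W \<Longrightarrow> v \<noteq> u \<Longrightarrow> degree (W \<union> D) (add_pendants F u D) v = degree W F v"
    and "degree (W \<union> D) (add_pendants F u D) u = degree W F u + card D"
proof -
  have F_W: "a \<in> W" if "{a, v} \<in> F" for a v using is_graph_edge_subset[OF graph that] by blast
  show "degree (W \<union> D) (add_pendants F u D) x = 1" if "x \<in> D" for x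
  proof -
    have "{a \<in> W \<union> D. {a, x} \<in> add_pendants F u D} = {u}"
      using add_pendants_edge_pendant[OF that] u by auto
    then show ?thesis unfolding degree_def by simp
  qed
  show "degree (W \<union> D) (add_pendants F u D) v = degree W F v" if "v \<in> W" "v \<noteq> u" for v
  proof -
    have "{a \<in> W \<union> D. {a, v} \<in> add_pendants F u D} = {a \<in> W. {a, v} \<in> F}"
      using add_pendants_edge_nonroot[OF that] F_W by auto
    then show ?thesis unfolding degree_def by simp
  qed
  have "{a \<in> W \<union> D. {a, u} \<in> add_pendants F u D} = {a \<in> W. {a, u} \<in> F} \<union> D"
    using add_pendants_edge_root F_W by auto
  moreover have "finite W" using graph unfolding is_graph_def by blast
  ultimately show "degree (W \<union> D) (add_pendants F u D) u = degree W F u + card D"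
    unfolding degree_def using assms disjoint by (simp add: card_Un_disjoint disjoint_iff)
qed

lemma branching_add_pendants:
  assumes "finite D" "\<forall>v\<in>W - {u}. degree W F v \<noteq> 1 \<longrightarrow> m \<le> degree W F v"
    "m \<le> degree W F u + card D"
  shows "branching m (W \<union> D) (add_pendants F u D)"
  unfolding branching_def
proof (intro ballI impI)
  fix v assume v: "v \<in> W \<union> D" "degree (W \<union> D) (add_pendants F u D) v \<noteq> 1"
  then have "v \<in> W" using degree_add_pendants(1)[OF assms(1)] by blast
  show "m \<le> degree (W \<union> D) (add_pendants F u D) v"
  proof (cases "v = u")
    case True
    then show ?thesis using assms(3) degree_add_pendants(3)[OF assms(1)] by simp
  next
    case False
    then have "degree (W \<union> D) (add_pendants F u D) v = degree W F v"
      using degree_add_pendants(2)[OF assms(1) \<open>v \<in> W\<close>] by blast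
    then show ?thesis using assms(2) v(2) \<open>v \<in> W\<close> False by auto
  qed
qed

end

lemma is_tree_add_pendants:
  assumes tree: "is_tree W F" and u: "u \<in> W" and disjoint: "W \<inter> D = {}" and "finite D"
  shows "is_tree (W \<union> D) (add_pendants F u D)"
proof -
  let ?F = "add_pendants F u D"
  have graph: "is_graph W F" using tree unfolding is_tree_def by blast
  have "is_graph (W \<union> D) ?F"
    unfolding is_graph_def
  proof (intro conjI ballI)
    show "finite (W \<union> D)" using graph \<open>finite D\<close> unfolding is_graph_def by blast
    fix e assume "e \<in> ?F"
    then consider "e \<in> F" | x where "x \<in> D" "e = {u, x}" unfolding add_pendants_def by blast
    then show "\<exists>a b. a \<in> W \<union> D \<and> b \<in> W \<union> D \<and> a \<noteq> b \<and> e = {a, b}"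
    proof cases
      case 1
      then obtain a b where "a \<in> W" "b \<in> W" "a \<noteq> b" "e = {a, b}"
        using graph unfolding is_graph_def by meson
      then show ?thesis by blast
    next
      case 2
      then show ?thesis using u disjoint by blast
    qed
  qed
  moreover have "connected_graph (W \<union> D) ?F"
  proof (rule connected_graphI_root[of u])
    fix y assume y: "y \<in> W \<union> D"
    show "\<exists>xs. walk (W \<union> D) ?F xs \<and> hd xs = y \<and> last xs = u"
    proof (cases "y \<in> D")
      case True
      then have "walk (W \<union> D) ?F [y, u]"
        using u unfolding add_pendants_def by (auto simp: insert_commute)
      then show ?thesis by (intro exI[of _ "[y, u]"]) simp
    next
      case False
      then obtain xs where "walk W F xs" "hd xs = y" "last xs = u"
        using tree y u unfolding is_tree_def connected_graph_def by blast
      moreover have "walk (W \<union> D) ?F xs"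
        by (rule walk_mono[OF \<open>walk W F xs\<close>]) (auto simp: add_pendants_def)
      ultimately show ?thesis by blast
    qed
  qed (use u in blast)
  moreover have "\<not> is_cycle (W \<union> D) ?F xs" for xs
  proof
    assume cycle: "is_cycle (W \<union> D) ?F xs"
    have "set xs \<subseteq> W"
    proof
      fix x assume "x \<in> set xs"
      then obtain a b where ab: "a \<noteq> b" "{x, a} \<in> ?F" "{x, b} \<in> ?F"
        using is_cycle_two_neighbours[OF cycle] by metis
      show "x \<in> W"
      proof (rule ccontr)
        assume "x \<notin> W"
        then have "x \<in> D" using cycle \<open>x \<in> set xs\<close> unfolding is_cycle_def walk_def by blast
        moreover have "{a, x} \<in> ?F" "{b, x} \<in> ?F" using ab(2,3) by (simp_all add: insert_commute)
        ultimately have "a = u" "b = u"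
          using add_pendants_edge_pendant[OF graph u disjoint] by blast+
        then show False using ab(1) by blast
      qed
    qed
    have "xs \<noteq> []" using cycle unfolding is_cycle_def by auto
    have "{xs ! i, xs ! Suc i} \<in> F" if "Suc i < length xs" for i
    proof -
      have "{xs ! i, xs ! Suc i} \<in> ?F" using cycle that unfolding is_cycle_def walk_def by blast
      moreover have "xs ! i \<in> W" "xs ! Suc i \<in> W" using \<open>set xs \<subseteq> W\<close> that by auto
      ultimately show ?thesis using add_pendants_edge_within[OF graph u disjoint] by blast
    qed
    moreover have "{last xs, hd xs} \<in> F"
    proof -
      have "{last xs, hd xs} \<in> ?F" using cycle unfolding is_cycle_def by blast
      moreover have "last xs \<in> W" "hd xs \<in> W" using \<open>set xs \<subseteq> W\<close> \<open>xs \<noteq> []\<close> by auto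
      ultimately show ?thesis using add_pendants_edge_within[OF graph u disjoint] by blast
    qed
    ultimately have "is_cycle W F xs"
      using cycle \<open>set xs \<subseteq> W\<close> unfolding is_cycle_def walk_def by blast
    then show False using tree unfolding is_tree_def by blast
  qed
  ultimately show ?thesis using u unfolding is_tree_def by blast
qed

lemma spanning_tree_add_pendants:
  assumes "spanning_tree W H F" "H \<subseteq> G" "u \<in> W" "W \<inter> D = {}" "finite D"
    "(\<lambda>x. {u, x}) ` D \<subseteq> G"
  shows "spanning_tree (W \<union> D) G (add_pendants F u D)"
proof -
  have "F \<subseteq> G" "is_tree W F" using assms(1,2) unfolding spanning_tree_def by auto
  have "add_pendants F u D \<subseteq> G"
    using \<open>F \<subseteq> G\<close> assms(6) unfolding add_pendants_def by (rule Un_least)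
  moreover have "is_tree (W \<union> D) (add_pendants F u D)"
    using \<open>is_tree W F\<close> assms(3-5) by (rule is_tree_add_pendants)
  ultimately show ?thesis unfolding spanning_tree_def ..
qed

section \<open>Descendants in a breadth-first tree\<close>

definition induced_edges :: "'a set set \<Rightarrow> 'a set \<Rightarrow> 'a set set" where
  "induced_edges E W = {e \<in> E. e \<subseteq> W}"

lemma is_graph_induced_edges: "is_graph V E \<Longrightarrow> W \<subseteq> V \<Longrightarrow> is_graph W (induced_edges E W)"
  unfolding is_graph_def induced_edges_def
  by (metis (no_types, lifting) finite_subset insert_subset mem_Collect_eq)

lemma connected_graph_induced_descent:
  fixes f :: "'a \<Rightarrow> nat"
  assumes "z \<in> W" and descent: "\<And>y. y \<in> W \<Longrightarrow> y \<noteq> z \<Longrightarrow> \<exists>p\<in>W. f p < f y \<and> {p, y} \<in> E"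
  shows "connected_graph W (induced_edges E W)"
proof (rule connected_graphI_root[OF assms(1)])
  fix y assume "y \<in> W"
  then show "\<exists>xs. walk W (induced_edges E W) xs \<and> hd xs = y \<and> last xs = z"
  proof (induction "f y" arbitrary: y rule: less_induct)
    case less
    show ?case
    proof (cases "y = z")
      case True
      then show ?thesis using less.prems by (intro exI[of _ "[y]"]) simp
    next
      case False
      then obtain p where p: "p \<in> W" "f p < f y" "{p, y} \<in> E" using descent less.prems by blast
      then obtain xs where xs: "walk W (induced_edges E W) xs" "hd xs = p" "last xs = z"
        using less.hyps by blast
      have "{y, p} \<in> induced_edges E W"
        using p less.prems unfolding induced_edges_def by (simp add: insert_commute)
      then have "walk W (induced_edges E W) (y # xs)"
        using xs walk_nonempty[OF xs(1)] less.prems by (cases xs) auto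
      then show ?thesis using xs walk_nonempty[OF xs(1)] by (intro exI[of _ "y # xs"]) simp
    qed
  qed
qed

text \<open>Relative to the root z, y is a descendant of u iff some shortest walk from z to y
  passes through u strictly before reaching y.\<close>

definition descendants :: "'a set \<Rightarrow> 'a set set \<Rightarrow> 'a \<Rightarrow> 'a \<Rightarrow> 'a set" where
  "descendants V E z u =
     {y \<in> V. gdist V E z u < gdist V E z y \<and> gdist V E z y = gdist V E z u + gdist V E u y}"

lemma descendants_edge_closed:
  assumes "connected_graph V E" "z \<in> V" "u \<in> V" "y \<in> V"
    and "p \<in> descendants V E z u" "{p, y} \<in> E" "gdist V E z y = Suc (gdist V E z p)"
  shows "y \<in> descendants V E z u"
proof -
  have p: "p \<in> V" "gdist V E z u < gdist V E z p" "gdist V E z p = gdist V E z u + gdist V E u p"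
    using assms(5) unfolding descendants_def by auto
  have "gdist V E u y \<le> gdist V E u p + gdist V E p y" by (rule gdist_triangle[OF assms(1,3) p(1) assms(4)])
  moreover have "gdist V E p y \<le> 1" using gdist_edge[OF assms(6) p(1) assms(4)] .
  moreover have "gdist V E z y \<le> gdist V E z u + gdist V E u y" by (rule gdist_triangle[OF assms(1-4)])
  ultimately show ?thesis using p assms(4,7) unfolding descendants_def by auto
qed

lemma connected_graph_minus_descendants:
  assumes "connected_graph V E" "z \<in> V" "u \<in> V"
  defines "W \<equiv> V - descendants V E z u"
  shows "connected_graph W (induced_edges E W)"
proof (rule connected_graph_induced_descent[where f = "gdist V E z"])
  show "z \<in> W" using assms(2) unfolding W_def descendants_def by simp
  fix y assume y: "y \<in> W" "y \<noteq> z"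
  then have "y \<in> V" unfolding W_def by blast
  then obtain n where "gdist V E z y = Suc n"
    using gdist_eq_0_iff[OF assms(1,2)] y(2) by (metis not0_implies_Suc)
  then obtain p where p: "p \<in> V" "gdist V E z p = n" "{p, y} \<in> E"
    using gdist_predecessor[OF assms(1,2) \<open>y \<in> V\<close>] by metis
  have "p \<notin> descendants V E z u"
    using descendants_edge_closed[OF assms(1-3) \<open>y \<in> V\<close> _ p(3)] p(2) \<open>gdist V E z y = Suc n\<close> y(1)
    unfolding W_def by blast
  then show "\<exists>p\<in>W. gdist V E z p < gdist V E z y \<and> {p, y} \<in> E"
    using p \<open>gdist V E z y = Suc n\<close> unfolding W_def by (intro bexI[of _ p]) auto
qed

lemma shortest_walk_descendants:
  assumes "connected_graph V E" "walk V E ws" "hd ws = z" "last ws = b"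
    "length ws = Suc (gdist V E z b)" "i < j" "j < length ws"
  shows "ws ! j \<in> descendants V E z (ws ! i)"
proof -
  have dist: "gdist V E z (ws ! i) = i" "gdist V E z (ws ! j) = j"
    using gdist_shortest_walk_nth[OF assms(1-5)] assms(6,7) by auto
  have inV: "z \<in> V" "ws ! i \<in> V" "ws ! j \<in> V"
    using assms(2,3,6,7) walk_nonempty[OF assms(2)] unfolding walk_def by auto
  have "gdist V E (ws ! i) (ws ! j) \<le> j - i" using gdist_nth_le[OF assms(2)] assms(6,7) by simp
  moreover have "gdist V E z (ws ! j) \<le> gdist V E z (ws ! i) + gdist V E (ws ! i) (ws ! j)"
    by (rule gdist_triangle[OF assms(1) inV])
  ultimately show ?thesis using dist inV assms(6) unfolding descendants_def by auto
qed

lemma obtain_descendant_split: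
  assumes "is_graph V E" "connected_graph V E" "V \<noteq> {}"
    and eccentric: "\<forall>c\<in>V. \<exists>y\<in>V. k < gdist V E c y"
  obtains u D where "u \<in> V - D" "D \<subseteq> V" "k \<le> card D" "\<forall>x\<in>D. gdist V E u x \<le> k"
    "connected_graph (V - D) (induced_edges E (V - D))"
proof -
  have "finite V" using assms(1) unfolding is_graph_def by blast
  obtain z where z: "z \<in> V" using assms(3) by blast
  define h where "h = Max (gdist V E z ` V)"
  have h_max: "gdist V E z y \<le> h" if "y \<in> V" for y
    unfolding h_def using \<open>finite V\<close> that by simp
  have "h \<in> gdist V E z ` V" unfolding h_def using \<open>finite V\<close> assms(3) by (intro Max_in) auto
  then obtain x0 where x0: "x0 \<in> V" "gdist V E z x0 = h" by blast
  obtain ws where ws: "walk V E ws" "hd ws = z" "last ws = x0" "length ws = Suc h"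
    using obtain_shortest_walk[OF assms(2) z x0(1)] x0(2) by metis
  have "k < h" using eccentric z h_max by (meson le_less_trans not_le)
  define u where "u = ws ! (h - k)"
  define D where "D = descendants V E z u"
  note ws_shortest = ws(1-3) ws(4)[folded x0(2)]
  have dist_u: "gdist V E z u = h - k"
    unfolding u_def using gdist_shortest_walk_nth[OF assms(2) ws_shortest] ws(4) by simp
  have "u \<in> V" unfolding u_def using ws(1,4) unfolding walk_def by auto
  moreover have "u \<notin> D" "D \<subseteq> V" unfolding D_def descendants_def by auto
  moreover have "k \<le> card D"
  proof -
    have "(!) ws ` {h - k <..h} \<subseteq> D"
      unfolding D_def u_def using shortest_walk_descendants[OF assms(2) ws_shortest] ws(4) by auto
    moreover have "inj_on ((!) ws) {h - k <..h}"
      using shortest_walk_inj_on_nth[OF assms(2) ws_shortest] by (rule inj_on_subset) (auto simp: ws(4))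
    moreover have "finite D" using \<open>D \<subseteq> V\<close> \<open>finite V\<close> by (rule finite_subset)
    ultimately have "card {h - k <..h} \<le> card D" by (metis card_image card_mono)
    then show ?thesis using \<open>k < h\<close> by simp
  qed
  moreover have "\<forall>x\<in>D. gdist V E u x \<le> k"
    using h_max dist_u \<open>k < h\<close> unfolding D_def descendants_def by fastforce
  moreover have "connected_graph (V - D) (induced_edges E (V - D))"
    unfolding D_def using connected_graph_minus_descendants[OF assms(2) z \<open>u \<in> V\<close>] .
  ultimately show ?thesis using that by blast
qed

section \<open>Spanning trees of graph powers\<close>

lemma graph_power_mono:
  assumes "connected_graph W H" "W \<subseteq> V" "H \<subseteq> E"
  shows "graph_power W H k \<subseteq> graph_power V E k"
proof
  fix e assume "e \<in> graph_power W H k"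
  then obtain a b where ab: "a \<in> W" "b \<in> W" "a \<noteq> b" "gdist W H a b \<le> k" "e = {a, b}"
    unfolding graph_power_def by blast
  then have "gdist V E a b \<le> k" using gdist_mono[OF assms(1) ab(1,2) assms(2,3)] by linarith
  then show "e \<in> graph_power V E k" using ab assms(2) unfolding graph_power_def by blast
qed

lemma star_edges_subset_graph_power:
  assumes "u \<in> V" "D \<subseteq> V - {u}" "\<forall>x\<in>D. gdist V E u x \<le> k"
  shows "(\<lambda>x. {u, x}) ` D \<subseteq> graph_power V E k"
proof (rule image_subsetI)
  fix x assume "x \<in> D"
  then have "x \<in> V" "u \<noteq> x" "gdist V E u x \<le> k" using assms by auto
  then show "{u, x} \<in> graph_power V E k" using assms(1) unfolding graph_power_def by blast
qed

lemma connected_graph_degree_pos: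
  assumes "is_graph V E" "connected_graph V E" "u \<in> V" "v \<in> V" "u \<noteq> v"
  shows "0 < degree V E u"
proof -
  obtain xs where xs: "walk V E xs" "hd xs = u" "last xs = v"
    using assms(2-4) unfolding connected_graph_def by blast
  then obtain w ys where "xs = u # w # ys"
    using assms(5) walk_nonempty[OF xs(1)] by (metis last_ConsL list.collapse list.sel(1))
  then have "walk V E (w # ys)" "{w, u} \<in> E" using xs(1) by (auto simp: insert_commute)
  then have "w \<in> {a \<in> V. {a, u} \<in> E}" unfolding walk_def by simp
  moreover have "finite V" using assms(1) unfolding is_graph_def by blast
  ultimately show ?thesis unfolding degree_def by (auto simp: card_gt_0_iff)
qed

lemma branching_add_pendants_tree:
  assumes "is_tree W F" "branching (k + 1) W F" "u \<in> W" "2 \<le> card W"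
    and "W \<inter> D = {}" "finite D" "k \<le> card D"
  shows "branching (k + 1) (W \<union> D) (add_pendants F u D)"
proof -
  have graph: "is_graph W F" and conn: "connected_graph W F" using assms(1) unfolding is_tree_def by auto
  have "finite W" using graph unfolding is_graph_def by blast
  moreover have "\<not> card W \<le> Suc 0" using assms(4) by linarith
  ultimately obtain v where "v \<in> W" "v \<noteq> u" using assms(3) card_le_Suc0_iff_eq[of W] by blast
  then have "0 < degree W F u" using connected_graph_degree_pos[OF graph conn assms(3)] by blast
  moreover have "degree W F u = 1 \<or> k + 1 \<le> degree W F u"
    using assms(2,3) unfolding branching_def by blast
  ultimately have "k + 1 \<le> degree W F u + card D" using assms(7) by (elim disjE) linarith+
  moreover have "\<forall>v\<in>W - {u}. degree W F v \<noteq> 1 \<longrightarrow> k + 1 \<le> degree W F v"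
    using assms(2) unfolding branching_def by blast
  ultimately show ?thesis using branching_add_pendants[OF graph assms(3,5,6)] by blast
qed

lemma connected_graph_power_branching_spanning_tree:
  assumes "is_graph V E" "connected_graph V E" "1 \<le> k" "k + 2 \<le> card V"
  shows "\<exists>F. spanning_tree V (graph_power V E k) F \<and> branching (k + 1) V F"
  using assms(1,2,4)
proof (induction "card V" arbitrary: V E rule: less_induct)
  case less
  have "finite V" using less.prems(1) unfolding is_graph_def by blast
  have "V \<noteq> {}" using less.prems(3) by auto
  consider c where "c \<in> V" "\<forall>y\<in>V. gdist V E c y \<le> k" | "\<forall>c\<in>V. \<exists>y\<in>V. k < gdist V E c y"
    using not_le by blast
  then show ?case
  proof cases
    case 1
    let ?D = "V - {c}"
    have "spanning_tree {c} {} {}" using is_tree_singleton[of c] unfolding spanning_tree_def by simp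
    then have "spanning_tree ({c} \<union> ?D) (graph_power V E k) (add_pendants {} c ?D)"
      by (rule spanning_tree_add_pendants)
        (use 1 \<open>finite V\<close> star_edges_subset_graph_power[of c V ?D E k] in auto)
    moreover have "branching (k + 1) ({c} \<union> ?D) (add_pendants {} c ?D)"
      using 1 \<open>finite V\<close> less.prems(3) is_tree_singleton[of c] unfolding is_tree_def
      by (intro branching_add_pendants) (auto simp: degree_def)
    moreover have "{c} \<union> ?D = V" using 1 by blast
    ultimately show ?thesis by metis
  next
    case 2
    obtain u D where split: "u \<in> V - D" "D \<subseteq> V" "k \<le> card D" "\<forall>x\<in>D. gdist V E u x \<le> k"
      and conn: "connected_graph (V - D) (induced_edges E (V - D))"
      using obtain_descendant_split[OF less.prems(1,2) \<open>V \<noteq> {}\<close> 2] by blast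
    let ?W = "V - D" and ?H = "induced_edges E (V - D)"
    have graph: "is_graph ?W ?H" using is_graph_induced_edges[OF less.prems(1)] by blast
    have "?H \<subseteq> E" unfolding induced_edges_def by blast
    obtain y where "y \<in> V" "k < gdist V E u y" using 2 split(1) by blast
    then have "y \<in> ?W" using split(4) by fastforce
    have "k < gdist ?W ?H u y"
      using gdist_mono[OF conn split(1) \<open>y \<in> ?W\<close> Diff_subset \<open>?H \<subseteq> E\<close>] \<open>k < gdist V E u y\<close>
      by linarith
    then have "k + 2 \<le> card ?W"
      using Suc_gdist_le_card[OF graph conn split(1) \<open>y \<in> ?W\<close>] by linarith
    moreover have "D \<noteq> {}" using split(3) assms(3) by auto
    then have "card ?W < card V" using split(2) \<open>finite V\<close> by (intro psubset_card_mono) auto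
    ultimately obtain F
      where F: "spanning_tree ?W (graph_power ?W ?H k) F" "branching (k + 1) ?W F"
      using less.hyps graph conn by blast
    have "spanning_tree (?W \<union> D) (graph_power V E k) (add_pendants F u D)"
      using F(1) graph_power_mono[OF conn Diff_subset \<open>?H \<subseteq> E\<close>]
      by (rule spanning_tree_add_pendants)
        (use split \<open>finite V\<close> finite_subset star_edges_subset_graph_power[of u V D E k] in auto)
    moreover have "branching (k + 1) (?W \<union> D) (add_pendants F u D)"
      using F split \<open>k + 2 \<le> card ?W\<close> \<open>finite V\<close> finite_subset unfolding spanning_tree_def
      by (intro branching_add_pendants_tree) auto
    moreover have "?W \<union> D = V" using split(2) by blast
    ultimately show ?thesis by metis
  qed
qed

theorem mainTheorem1:
  fixes V :: "'a set" and E :: "'a set set" and d k :: nat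
  assumes "is_tree V E"
    and "diameter V E = d"
    and "1 \<le> k" and "k + 1 \<le> d"
  shows "\<exists>F. spanning_tree V (graph_power V E k) F \<and> branching (k + 1) V F"
proof -
  have "is_graph V E" "connected_graph V E" "V \<noteq> {}"
    using assms(1) unfolding is_tree_def by auto
  moreover have "k + 2 \<le> card V" using Suc_diameter_le_card[OF calculation] assms(2,4) by linarith
  ultimately show ?thesis using connected_graph_power_branching_spanning_tree assms(3) by blast
qed

end
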